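(* Let $a$ and $b$ be real constants with $a>b>0$. There is a constant $C_0>0$ such that for every $j\in\mathbb{Z}_+$, every $R\ge C_0(j+1)$ and every $\rho>0$, $$\int_{R}^{+\infty}\frac{1}{\tau^{j}}e^{-a|\rho-\tau|-b\tau}\,d\tau\le\left(\frac1a+\frac{2}{a-b}\right)\frac{e^{-b\rho}}{\rho^{j}}.$$ *)

theory Defs
  imports "HOL-Analysis.Analysis"
begin

end

theory Submission
  imports Defs
begin

text \<open>Split the integral at \<open>\<tau> = \<rho>\<close>. For \<open>\<tau> \<ge> \<rho>\<close> the integrand is at most
  \<open>exp (- b * \<rho>) / \<rho> ^ j * exp (- a * (\<tau> - \<rho>))\<close>. For \<open>R \<le> \<tau> < \<rho>\<close> it equals
  \<open>exp (- b * \<rho>) / \<tau> ^ j * exp (- (a - b) * (\<rho> - \<tau>))\<close>, and since \<open>\<tau> \<ge> R \<ge> 2 j / (a - b)\<close>,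
  \<open>(\<rho> / \<tau>) ^ j \<le> exp (j * (\<rho> - \<tau>) / \<tau>) \<le> exp ((a - b) / 2 * (\<rho> - \<tau>))\<close>: half of the
  exponential gain pays for the power loss. The two exponentials then integrate to \<open>1 / a\<close> and
  \<open>2 / (a - b)\<close>.\<close>

definition two_sided_exp :: "real \<Rightarrow> real \<Rightarrow> real \<Rightarrow> real \<Rightarrow> real" where
  "two_sided_exp a c r t = exp (- a * (t - r)) * indicator {r..} t + exp (- c * (r - t)) * indicator {..r} t"

lemma nn_integral_exp_decay_Ici:
  fixes c r :: real
  assumes "c > 0"
  shows "(\<integral>\<^sup>+t. ennreal (exp (- c * (t - r))) * indicator {r..} t \<partial>lborel) = ennreal (1 / c)"
proof (rule nn_integral_has_integral_lebesgue')
  have "((\<lambda>t. exp (c * r) * exp (- c * t)) has_integral exp (c * r) * (exp (- c * r) / c)) {r..}"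
    by (intro has_integral_mult_right has_integral_exp_minus_to_infinity assms)
  moreover have "exp (c * r) * (exp (- c * r) / c) = 1 / c"
    by (simp add: exp_minus field_simps)
  moreover have "exp (c * r) * exp (- c * t) = exp (- c * (t - r))" for t
    by (simp add: mult_exp_exp algebra_simps)
  ultimately show "((\<lambda>t. exp (- c * (t - r))) has_integral 1 / c) {r..}"
    by simp
qed simp

lemma nn_integral_exp_decay_Iic:
  fixes c r :: real
  assumes "c > 0"
  shows "(\<integral>\<^sup>+t. ennreal (exp (- c * (r - t))) * indicator {..r} t \<partial>lborel) = ennreal (1 / c)"
proof -
  have reflect: "ennreal (exp (- c * (r - (0 + -1 * t)))) * indicator {..r} (0 + -1 * t)
      = ennreal (exp (- c * (t - - r))) * indicator {- r..} t" for t :: real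
    by (simp add: indicator_def algebra_simps)
  have "(\<integral>\<^sup>+t. ennreal (exp (- c * (r - t))) * indicator {..r} t \<partial>lborel)
      = ennreal \<bar>-1\<bar> * (\<integral>\<^sup>+t. ennreal (exp (- c * (r - (0 + -1 * t)))) * indicator {..r} (0 + -1 * t) \<partial>lborel)"
    by (rule nn_integral_real_affine) auto
  also have "\<dots> = (\<integral>\<^sup>+t. ennreal (exp (- c * (t - - r))) * indicator {- r..} t \<partial>lborel)"
    by (simp only: reflect) simp
  also have "\<dots> = ennreal (1 / c)"
    by (rule nn_integral_exp_decay_Ici[OF assms])
  finally show ?thesis .
qed

lemma nn_integral_two_sided_exp:
  fixes a c r :: real
  assumes "a > 0" "c > 0"
  shows "(\<integral>\<^sup>+t. ennreal (two_sided_exp a c r t) \<partial>lborel) = ennreal (1 / a + 1 / c)"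
proof -
  have split: "ennreal (two_sided_exp a c r t)
      = ennreal (exp (- a * (t - r))) * indicator {r..} t + ennreal (exp (- c * (r - t))) * indicator {..r} t"
    for t
    by (simp add: two_sided_exp_def ennreal_plus indicator_mult_ennreal mult.commute)
  have "(\<integral>\<^sup>+t. ennreal (two_sided_exp a c r t) \<partial>lborel)
      = (\<integral>\<^sup>+t. ennreal (exp (- a * (t - r))) * indicator {r..} t \<partial>lborel)
        + (\<integral>\<^sup>+t. ennreal (exp (- c * (r - t))) * indicator {..r} t \<partial>lborel)"
    unfolding split by (rule nn_integral_add) measurable
  also have "\<dots> = ennreal (1 / a + 1 / c)"
    using assms by (simp only: nn_integral_exp_decay_Ici nn_integral_exp_decay_Iic) (simp add: ennreal_plus)
  finally show ?thesis .
qed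

lemma power_ratio_le_exp:
  fixes t \<rho> \<kappa> :: real and j :: nat
  assumes "0 < t" "t \<le> \<rho>" "real j \<le> \<kappa> * t"
  shows "(\<rho> / t) ^ j \<le> exp (\<kappa> * (\<rho> - t))"
proof -
  have "(\<rho> / t) ^ j = (1 + (\<rho> - t) / t) ^ j"
    using assms(1) by (simp add: field_simps)
  also have "\<dots> \<le> exp ((\<rho> - t) / t) ^ j"
    by (intro power_mono) (use assms in \<open>auto simp: exp_ge_add_one_self\<close>)
  also have "\<dots> = exp ((\<rho> - t) * (real j / t))"
    by (simp add: exp_of_nat_mult[symmetric] mult.commute)
  also have "\<dots> \<le> exp ((\<rho> - t) * \<kappa>)"
    using assms by (intro exp_le_cancel_iff[THEN iffD2] mult_left_mono) (auto simp: field_simps)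
  finally show ?thesis
    by (simp add: mult.commute)
qed

lemma kernel_le_right:
  fixes a b t \<rho> :: real and j :: nat
  assumes "0 < \<rho>" "\<rho> \<le> t" "0 \<le> b"
  shows "(1 / t ^ j) * exp (- a * \<bar>\<rho> - t\<bar> - b * t) \<le> exp (- b * \<rho>) / \<rho> ^ j * exp (- a * (t - \<rho>))"
proof -
  have "1 / t ^ j \<le> 1 / \<rho> ^ j"
    using assms by (intro divide_left_mono power_mono) auto
  moreover have "b * \<rho> \<le> b * t"
    using assms by (intro mult_left_mono)
  then have "exp (- a * \<bar>\<rho> - t\<bar> - b * t) \<le> exp (- b * \<rho>) * exp (- a * (t - \<rho>))"
    unfolding mult_exp_exp using assms by (simp add: algebra_simps)
  ultimately show ?thesis
    using assms(1) by (auto dest: mult_mono)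
qed

lemma kernel_le_left:
  fixes a b \<kappa> t \<rho> :: real and j :: nat
  assumes "0 < t" "t \<le> \<rho>" "real j \<le> \<kappa> * t"
  shows "(1 / t ^ j) * exp (- a * \<bar>\<rho> - t\<bar> - b * t)
    \<le> exp (- b * \<rho>) / \<rho> ^ j * exp (- (a - b - \<kappa>) * (\<rho> - t))"
proof -
  define gain where "gain = exp (- b * \<rho>) * exp (- (a - b) * (\<rho> - t))"
  have "exp (- a * \<bar>\<rho> - t\<bar> - b * t) = gain"
    unfolding gain_def mult_exp_exp using assms by (simp add: algebra_simps)
  then have "(1 / t ^ j) * exp (- a * \<bar>\<rho> - t\<bar> - b * t) = 1 / t ^ j * gain"
    by simp
  also have "\<dots> \<le> exp (\<kappa> * (\<rho> - t)) / \<rho> ^ j * gain"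
    using power_ratio_le_exp[OF assms] assms
    by (intro mult_right_mono) (simp_all add: gain_def field_simps)
  also have "\<dots> = exp (- b * \<rho>) / \<rho> ^ j * (exp (\<kappa> * (\<rho> - t)) * exp (- (a - b) * (\<rho> - t)))"
    unfolding gain_def by (simp add: ac_simps)
  also have "exp (\<kappa> * (\<rho> - t)) * exp (- (a - b) * (\<rho> - t)) = exp (- (a - b - \<kappa>) * (\<rho> - t))"
    unfolding mult_exp_exp by (simp add: algebra_simps)
  finally show ?thesis .
qed

lemma kernel_le_two_sided_exp:
  fixes a b \<kappa> t \<rho> :: real and j :: nat
  assumes "0 < \<rho>" "0 \<le> b" "0 < t" "real j \<le> \<kappa> * t"
  shows "(1 / t ^ j) * exp (- a * \<bar>\<rho> - t\<bar> - b * t)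
    \<le> exp (- b * \<rho>) / \<rho> ^ j * two_sided_exp a (a - b - \<kappa>) \<rho> t"
proof (cases "\<rho> \<le> t")
  case True
  have "(1 / t ^ j) * exp (- a * \<bar>\<rho> - t\<bar> - b * t) \<le> exp (- b * \<rho>) / \<rho> ^ j * exp (- a * (t - \<rho>))"
    by (rule kernel_le_right[OF assms(1) True assms(2)])
  also have "\<dots> \<le> exp (- b * \<rho>) / \<rho> ^ j * two_sided_exp a (a - b - \<kappa>) \<rho> t"
    using True assms(1) by (intro mult_left_mono) (auto simp: two_sided_exp_def)
  finally show ?thesis .
next
  case False
  have "(1 / t ^ j) * exp (- a * \<bar>\<rho> - t\<bar> - b * t)
      \<le> exp (- b * \<rho>) / \<rho> ^ j * exp (- (a - b - \<kappa>) * (\<rho> - t))"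
    using False by (intro kernel_le_left assms(3,4)) simp
  also have "\<dots> \<le> exp (- b * \<rho>) / \<rho> ^ j * two_sided_exp a (a - b - \<kappa>) \<rho> t"
    using False assms(1) by (intro mult_left_mono) (auto simp: two_sided_exp_def)
  finally show ?thesis .
qed

lemma set_nn_integral_kernel_le:
  fixes a b \<kappa> R \<rho> :: real and j :: nat
  assumes "0 < b" "0 < \<kappa>" "\<kappa> < a - b" "0 < \<rho>" "0 < R" "real j \<le> \<kappa> * R"
  shows "set_nn_integral lborel {R..} (\<lambda>\<tau>. ennreal ((1 / \<tau> ^ j) * exp (- a * \<bar>\<rho> - \<tau>\<bar> - b * \<tau>)))
    \<le> ennreal ((1 / a + 1 / (a - b - \<kappa>)) * exp (- b * \<rho>) / \<rho> ^ j)"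
proof -
  define K where "K = exp (- b * \<rho>) / \<rho> ^ j"
  let ?majorant = "two_sided_exp a (a - b - \<kappa>) \<rho>"
  have K: "K > 0"
    using assms(4) by (simp add: K_def)
  have pointwise: "(1 / t ^ j) * exp (- a * \<bar>\<rho> - t\<bar> - b * t) \<le> K * ?majorant t" if "R \<le> t" for t
  proof -
    have "0 < t" "real j \<le> \<kappa> * t"
      using assms(5,6) that mult_left_mono[OF that less_imp_le[OF assms(2)]] by linarith+
    then show ?thesis
      unfolding K_def by (rule kernel_le_two_sided_exp[OF assms(4) less_imp_le[OF assms(1)]])
  qed
  have measurable: "(\<lambda>t. ennreal (?majorant t)) \<in> borel_measurable lborel"
    unfolding two_sided_exp_def by measurable
  have "set_nn_integral lborel {R..} (\<lambda>\<tau>. ennreal ((1 / \<tau> ^ j) * exp (- a * \<bar>\<rho> - \<tau>\<bar> - b * \<tau>)))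
      \<le> (\<integral>\<^sup>+t. ennreal (K * ?majorant t) \<partial>lborel)"
  proof (intro nn_integral_mono)
    show "ennreal ((1 / t ^ j) * exp (- a * \<bar>\<rho> - t\<bar> - b * t)) * indicator {R..} t \<le> ennreal (K * ?majorant t)" for t
      using pointwise[of t] by (cases "R \<le> t") (simp_all add: ennreal_leI)
  qed
  also have "\<dots> = ennreal K * (\<integral>\<^sup>+t. ennreal (?majorant t) \<partial>lborel)"
    using K measurable by (simp add: ennreal_mult' nn_integral_cmult)
  also have "(\<integral>\<^sup>+t. ennreal (?majorant t) \<partial>lborel) = ennreal (1 / a + 1 / (a - b - \<kappa>))"
    using assms by (intro nn_integral_two_sided_exp) simp_all
  also have "ennreal K * ennreal (1 / a + 1 / (a - b - \<kappa>)) = ennreal ((1 / a + 1 / (a - b - \<kappa>)) * exp (- b * \<rho>) / \<rho> ^ j)"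
    using K by (simp add: K_def ennreal_mult'[symmetric] mult.commute)
  finally show ?thesis .
qed

theorem lemma5p7:
  fixes a b :: real
  assumes "a > b" and "b > 0"
  shows "\<exists>C0::real. C0 > 0 \<and>
    (\<forall>(j::nat) (R::real) (\<rho>::real). R \<ge> C0 * (real j + 1) \<longrightarrow> \<rho> > 0 \<longrightarrow>
      set_nn_integral lborel {R..}
        (\<lambda>\<tau>. ennreal ((1 / \<tau> ^ j) * exp (- a * \<bar>\<rho> - \<tau>\<bar> - b * \<tau>)))
      \<le> ennreal ((1 / a + 2 / (a - b)) * exp (- b * \<rho>) / \<rho> ^ j))"
proof (intro exI[of _ "2 / (a - b)"] conjI allI impI)
  show "2 / (a - b) > 0"
    using assms by simp
  fix j :: nat and R \<rho> :: real
  assume R: "2 / (a - b) * (real j + 1) \<le> R" and \<rho>: "\<rho> > 0"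
  define \<kappa> where "\<kappa> = (a - b) / 2"
  have \<kappa>: "0 < \<kappa>" "\<kappa> < a - b" and half: "a - b - \<kappa> = (a - b) / 2"
    using assms by (simp_all add: \<kappa>_def field_simps)
  have j_le: "real j + 1 \<le> \<kappa> * R"
    using R assms by (simp add: \<kappa>_def field_simps)
  then have "R > 0"
    using zero_less_mult_pos[OF less_le_trans[OF _ j_le] \<kappa>(1)] by simp
  from set_nn_integral_kernel_le[OF assms(2) \<kappa> \<rho> \<open>R > 0\<close>, of j]
  show "set_nn_integral lborel {R..} (\<lambda>\<tau>. ennreal ((1 / \<tau> ^ j) * exp (- a * \<bar>\<rho> - \<tau>\<bar> - b * \<tau>)))
      \<le> ennreal ((1 / a + 2 / (a - b)) * exp (- b * \<rho>) / \<rho> ^ j)"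
    using j_le unfolding half by simp
qed

end
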